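(* Let $\tau$ be any substitution whose ll and rl graphs are subfixed. Then \[\mathcal{L}_2(\tau)=\{u\in\mathcal{A}^2 : \exists a\in\mathcal{A},\ u \text{ is a factor of } \tau(a)\}\cup\{u\in\mathcal{A}^2 : \exists a\in\mathcal{A},\ u \text{ is a factor of } \tau^2(a)\}.\]
   Context: Let $\mathcal{A}$ be a finite nonempty alphabet, $\mathcal{A}^2$ the set of words of length $2$. A word $u$ is a factor of $v$ if $v=w_1uw_2$ for some words $w_1,w_2$. A substitution is a map $\tau:\mathcal{A}\to\mathcal{A}^+$ (nonempty words), extended to a concatenation-respecting map on words. The language $\mathcal{L}(\tau)$ is the set of words that are factors of $\tau^n(a)$ for some letter $a$ and some $n\ge1$, and $\mathcal{L}_2(\tau)$ is its set of words of length $2$. The ll graph (resp. rl graph) is the directed graph on vertex set $\mathcal{A}$ with exactly one edge from each letter $a$ to the leftmost (resp. rightmost) letter of $\tau(a)$. Such a graph is subfixed if for every vertex $x$, either the edge leaving $x$ goes to $x$, or it goes to a vertex $y$ whose outgoing edge goes to $y$ itself. *)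

theory Defs
  imports Main
begin

definition is_substitution :: "('a \<Rightarrow> 'a list) \<Rightarrow> bool" where
  "is_substitution \<tau> \<longleftrightarrow> (\<forall>a. \<tau> a \<noteq> [])"

definition subst_word :: "('a \<Rightarrow> 'a list) \<Rightarrow> 'a list \<Rightarrow> 'a list" where
  "subst_word \<tau> w = concat (map \<tau> w)"

definition is_factor :: "'a list \<Rightarrow> 'a list \<Rightarrow> bool" where
  "is_factor u v \<longleftrightarrow> (\<exists>w1 w2. v = w1 @ u @ w2)"

definition lang :: "('a \<Rightarrow> 'a list) \<Rightarrow> 'a list set" where
  "lang \<tau> = {u. \<exists>a n. n \<ge> 1 \<and> is_factor u ((subst_word \<tau> ^^ n) [a])}"

definition lang2 :: "('a \<Rightarrow> 'a list) \<Rightarrow> 'a list set" where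
  "lang2 \<tau> = {u \<in> lang \<tau>. length u = 2}"

text \<open>ll graph: edge a -> leftmost letter of tau(a); rl graph: rightmost letter.\<close>
definition ll_edge :: "('a \<Rightarrow> 'a list) \<Rightarrow> 'a \<Rightarrow> 'a" where
  "ll_edge \<tau> a = hd (\<tau> a)"

definition rl_edge :: "('a \<Rightarrow> 'a list) \<Rightarrow> 'a \<Rightarrow> 'a" where
  "rl_edge \<tau> a = last (\<tau> a)"

definition subfixed :: "('a \<Rightarrow> 'a) \<Rightarrow> bool" where
  "subfixed g \<longleftrightarrow> (\<forall>x. g x = x \<or> g (g x) = g x)"

end

theory Submission
  imports Defs
begin

text \<open>A factor of length two of \<open>\<tau>(w)\<close> either lies inside some \<open>\<tau>(c)\<close> or straddles a
  boundary, in which case it is \<open>[last \<tau>(c), hd \<tau>(d)]\<close> for a factor \<open>[c, d]\<close> of \<open>w\<close>.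
  Hence \<open>\<L>\<^sub>2(\<tau>)\<close> is contained in every set of two-letter words that contains the
  two-letter factors of all \<open>\<tau>(a)\<close> and is closed under \<open>[c, d] \<mapsto> [last \<tau>(c), hd \<tau>(d)]\<close>.
  The two-letter factors of the words \<open>\<tau>(a)\<close> and \<open>\<tau>\<^sup>2(a)\<close> form such a set: a straddling
  factor of \<open>\<tau>\<^sup>2(a)\<close> has the form \<open>[last \<tau>(e), hd \<tau>(f)]\<close>, and since both graphs are
  subfixed, \<open>last \<tau>\<close> and \<open>hd \<tau>\<close> are idempotent on letters, so the map fixes it.\<close>

lemma is_factor_Nil_iff [simp]: "is_factor u [] \<longleftrightarrow> u = []"
  unfolding is_factor_def by auto

lemma is_factor_pair_Cons_iff:
  "is_factor [x, y] (c # v) \<longleftrightarrow> (c = x \<and> v \<noteq> [] \<and> hd v = y) \<or> is_factor [x, y] v"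
proof -
  have "is_factor u (c # v) \<longleftrightarrow> (\<exists>w. c # v = u @ w) \<or> is_factor u v" for u
    unfolding is_factor_def by (auto simp: Cons_eq_append_conv)
  then show ?thesis by (cases v) auto
qed

lemma is_factor_pair_append_iff:
  "is_factor [x, y] (v @ w) \<longleftrightarrow> is_factor [x, y] v \<or> is_factor [x, y] w \<or>
     (v \<noteq> [] \<and> w \<noteq> [] \<and> x = last v \<and> y = hd w)"
  by (induction v) (auto simp: is_factor_pair_Cons_iff)

lemma subst_word_Nil [simp]: "subst_word \<tau> [] = []"
  and subst_word_Cons [simp]: "subst_word \<tau> (c # w) = \<tau> c @ subst_word \<tau> w"
  by (simp_all add: subst_word_def)

lemma subst_word_eq_Nil_iff [simp]:
  "is_substitution \<tau> \<Longrightarrow> subst_word \<tau> w = [] \<longleftrightarrow> w = []"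
  by (cases w) (auto simp: is_substitution_def)

lemma subst_word_singleton [simp]: "subst_word \<tau> [a] = \<tau> a"
  by (simp add: subst_word_def)

lemma hd_subst_word:
  "is_substitution \<tau> \<Longrightarrow> w \<noteq> [] \<Longrightarrow> hd (subst_word \<tau> w) = hd (\<tau> (hd w))"
  by (cases w) (auto simp: is_substitution_def)

lemma is_factor_pair_subst_word_iff:
  assumes "is_substitution \<tau>"
  shows "is_factor [x, y] (subst_word \<tau> w) \<longleftrightarrow>
    (\<exists>c \<in> set w. is_factor [x, y] (\<tau> c)) \<or>
    (\<exists>c d. is_factor [c, d] w \<and> x = last (\<tau> c) \<and> y = hd (\<tau> d))"
proof (induction w)
  case (Cons c w)
  have "\<tau> c \<noteq> []"
    using assms by (simp add: is_substitution_def)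
  then have "is_factor [x, y] (subst_word \<tau> (c # w)) \<longleftrightarrow>
      is_factor [x, y] (\<tau> c) \<or> is_factor [x, y] (subst_word \<tau> w) \<or>
      (w \<noteq> [] \<and> x = last (\<tau> c) \<and> y = hd (\<tau> (hd w)))"
    using assms by (auto simp: is_factor_pair_append_iff hd_subst_word)
  also have "\<dots> \<longleftrightarrow> (\<exists>c' \<in> set (c # w). is_factor [x, y] (\<tau> c')) \<or>
    (\<exists>c' d. is_factor [c', d] (c # w) \<and> x = last (\<tau> c') \<and> y = hd (\<tau> d))"
    unfolding Cons.IH is_factor_pair_Cons_iff by auto
  finally show ?case .
qed simp

lemma lang2_subset_if_closed:
  assumes subst: "is_substitution \<tau>"
    and letter_pairs: "\<And>a x y. is_factor [x, y] (\<tau> a) \<Longrightarrow> [x, y] \<in> S"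
    and closed: "\<And>c d. [c, d] \<in> S \<Longrightarrow> [last (\<tau> c), hd (\<tau> d)] \<in> S"
  shows "lang2 \<tau> \<subseteq> S"
proof
  have "is_factor [x, y] ((subst_word \<tau> ^^ n) [a]) \<Longrightarrow> [x, y] \<in> S" if "n \<ge> 1" for n a x y
    using that
  proof (induction n arbitrary: x y rule: dec_induct)
    case base
    then show ?case
      using letter_pairs by simp
  next
    case (step n)
    then show ?case
      using letter_pairs closed by (auto simp: is_factor_pair_subst_word_iff[OF subst])
  qed
  then show "u \<in> S" if "u \<in> lang2 \<tau>" for u
    using that by (auto simp: lang2_def lang_def length_Suc_conv numeral_2_eq_2)
qed

lemma subfixed_idem: "subfixed g \<Longrightarrow> g (g x) = g x"
  unfolding subfixed_def by metis

definition two_step_pairs :: "('a \<Rightarrow> 'a list) \<Rightarrow> 'a list set" where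
  "two_step_pairs \<tau> =
     {u. length u = 2 \<and> (\<exists>a. is_factor u (\<tau> a) \<or> is_factor u (subst_word \<tau> (\<tau> a)))}"

lemma two_step_pairs_subset_lang2: "two_step_pairs \<tau> \<subseteq> lang2 \<tau>"
proof
  fix u
  assume "u \<in> two_step_pairs \<tau>"
  then obtain a where "length u = 2"
    and "is_factor u ((subst_word \<tau> ^^ 1) [a]) \<or> is_factor u ((subst_word \<tau> ^^ 2) [a])"
    by (auto simp: two_step_pairs_def numeral_2_eq_2)
  moreover have "(1::nat) \<le> 2"
    by simp
  ultimately show "u \<in> lang2 \<tau>"
    unfolding lang2_def lang_def by blast
qed

lemma two_step_pairs_closed:
  assumes subst: "is_substitution \<tau>"
    and ll: "subfixed (ll_edge \<tau>)" and rl: "subfixed (rl_edge \<tau>)"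
    and cd: "[c, d] \<in> two_step_pairs \<tau>"
  shows "[last (\<tau> c), hd (\<tau> d)] \<in> two_step_pairs \<tau>"
proof -
  have inner: "[last (\<tau> c), hd (\<tau> d)] \<in> two_step_pairs \<tau>" if "is_factor [c, d] (\<tau> a)" for a
    using that by (auto simp: two_step_pairs_def is_factor_pair_subst_word_iff[OF subst])
  obtain a where "is_factor [c, d] (\<tau> a) \<or> is_factor [c, d] (subst_word \<tau> (\<tau> a))"
    using cd by (auto simp: two_step_pairs_def)
  then consider b where "is_factor [c, d] (\<tau> b)"
    | e f where "c = last (\<tau> e)" "d = hd (\<tau> f)"
    by (auto simp: is_factor_pair_subst_word_iff[OF subst])
  then show ?thesis
  proof cases
    case 2
    then have "last (\<tau> c) = c" "hd (\<tau> d) = d"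
      using subfixed_idem[OF rl, of e] subfixed_idem[OF ll, of f]
      by (simp_all add: rl_edge_def ll_edge_def)
    then show ?thesis using cd by simp
  qed (rule inner)
qed

theorem mainTheorem11:
  fixes \<tau> :: "'a::finite \<Rightarrow> 'a list"
  assumes "is_substitution \<tau>"
    and "subfixed (ll_edge \<tau>)"
    and "subfixed (rl_edge \<tau>)"
  shows "lang2 \<tau> =
    {u. length u = 2 \<and> (\<exists>a. is_factor u (\<tau> a))} \<union>
    {u. length u = 2 \<and> (\<exists>a. is_factor u (subst_word \<tau> (subst_word \<tau> [a])))}"
proof -
  have "lang2 \<tau> = two_step_pairs \<tau>"
  proof
    show "lang2 \<tau> \<subseteq> two_step_pairs \<tau>"
    proof (rule lang2_subset_if_closed[OF assms(1)])
      show "[x, y] \<in> two_step_pairs \<tau>" if "is_factor [x, y] (\<tau> a)" for a x y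
        using that by (auto simp: two_step_pairs_def)
    qed (rule two_step_pairs_closed[OF assms])
  qed (rule two_step_pairs_subset_lang2)
  also have "\<dots> = {u. length u = 2 \<and> (\<exists>a. is_factor u (\<tau> a))} \<union>
    {u. length u = 2 \<and> (\<exists>a. is_factor u (subst_word \<tau> (subst_word \<tau> [a])))}"
    by (auto simp: two_step_pairs_def)
  finally show ?thesis .
qed

end
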